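(* Let $H$ be the group defined below (with sets $A_\alpha=\{n\in\omega:\eta_\alpha(n)=1\}$), let $0\to T\to G\xrightarrow{\varphi}H\to 0$ be a balanced exact sequence with $T$ a torsion group (viewed as a subgroup of $G$), and fix elements $g_\alpha\in G$ with $\varphi(g_\alpha)=y_\alpha$ ($\alpha<\kappa$) and $\tilde x_n\in G$ with $\varphi(\tilde x_n)=x_n$ ($n\in\omega$). For $\alpha<\kappa$ and $t\in T$ let $R_{\alpha,t}=\{n\in A_\alpha : g_\alpha-t-\tilde x_n \text{ is not divisible by } p_n \text{ in } G\}$. Let $\alpha<\kappa$ and $t\in T$ be such that $R_{\alpha,t}$ is finite. Then there exists $t_\alpha\in T$ such that $R_{\alpha,t_\alpha}=\emptyset$.
   Context: All groups are abelian. A pure subgroup $A$ of a torsion-free group $G$ is balanced if every coset $g+A$ contains an element $g+a$ ($a\in A$) whose characteristic is $\geq$ that of $g+x$ for all $x\in A$; an exact sequence $0\to A\to G\to C\to0$ is balanced exact if the image of $A$ is balanced in $G$. Setting: $\kappa$ is an uncountable cardinal, $\eta_\alpha:\omega\to 2$ ($\alpha<\kappa$) are the Cohen reals added by the forcing of finite partial functions $\kappa\times\omega\to 2$ (the lemma is considered in the generic extension). Fix primes $p_0<p_1<\cdots$; let $W=\bigoplus_{n\in\omega}\mathbb{Q}x_n\oplus\bigoplus_{\alpha<\kappa}\mathbb{Q}y_\alpha$ on independent elements, $F=\bigoplus_n\mathbb{Z}x_n\oplus\bigoplus_{\alpha<\kappa}\mathbb{Z}y_\alpha$, and $H$ the subgroup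 of $W$ generated by $F$ and all $p_n^{-1}(y_\alpha-x_n)$ with $\eta_\alpha(n)=1$. *)

theory Defs
  imports Main "HOL-Library.Extended_Nat" "HOL-Library.Countable_Set"
    "HOL-Computational_Algebra.Primes" "HOL-Library.Function_Algebras"
begin

fun nsmul :: "nat \<Rightarrow> 'a::monoid_add \<Rightarrow> 'a" where
  "nsmul 0 g = 0"
| "nsmul (Suc n) g = g + nsmul n g"

text \<open>g is divisible by m in the ambient group (the whole type).\<close>
definition divisible_by :: "nat \<Rightarrow> 'a::monoid_add \<Rightarrow> bool" where
  "divisible_by m g \<longleftrightarrow> (\<exists>h. g = nsmul m h)"

definition p_height :: "nat \<Rightarrow> 'a::monoid_add \<Rightarrow> enat" where
  "p_height p g = Sup (enat ` {k. divisible_by (p ^ k) g})"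

definition char_le :: "'a::monoid_add \<Rightarrow> 'a \<Rightarrow> bool" where
  "char_le g h \<longleftrightarrow> (\<forall>p::nat. prime p \<longrightarrow> p_height p g \<le> p_height p h)"

definition is_subgroup :: "'a::ab_group_add set \<Rightarrow> bool" where
  "is_subgroup A \<longleftrightarrow> 0 \<in> A \<and> (\<forall>a\<in>A. \<forall>b\<in>A. a - b \<in> A)"

definition pure_subgroup :: "'a::ab_group_add set \<Rightarrow> bool" where
  "pure_subgroup A \<longleftrightarrow> is_subgroup A \<and>
     (\<forall>n a. a \<in> A \<longrightarrow> divisible_by n a \<longrightarrow> (\<exists>b\<in>A. a = nsmul n b))"

definition balanced :: "'a::ab_group_add set \<Rightarrow> bool" where
  "balanced A \<longleftrightarrow> pure_subgroup A \<and>
     (\<forall>g. \<exists>a\<in>A. \<forall>x\<in>A. char_le (g + x) (g + a))"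

definition torsion_set :: "'a::ab_group_add set \<Rightarrow> bool" where
  "torsion_set A \<longleftrightarrow> (\<forall>a\<in>A. \<exists>n>0. nsmul n a = 0)"

text \<open>The Q-vector space W with basis x_n (index Inl n) and y_alpha (index Inr alpha);
  elements are functions to rat (H consists of finitely supported ones).\<close>
definition xW :: "nat \<Rightarrow> (nat + 'k \<Rightarrow> rat)" where
  "xW n = (\<lambda>i. if i = Inl n then 1 else 0)"

definition yW :: "'k \<Rightarrow> (nat + 'k \<Rightarrow> rat)" where
  "yW a = (\<lambda>i. if i = Inr a then 1 else 0)"

inductive_set gen_subgroup :: "'a::ab_group_add set \<Rightarrow> 'a set" for S where
  gen_zero: "0 \<in> gen_subgroup S"
| gen_base: "s \<in> S \<Longrightarrow> s \<in> gen_subgroup S"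
| gen_diff: "a \<in> gen_subgroup S \<Longrightarrow> b \<in> gen_subgroup S \<Longrightarrow> a - b \<in> gen_subgroup S"

definition Hgrp :: "(nat \<Rightarrow> nat) \<Rightarrow> ('k \<Rightarrow> nat \<Rightarrow> bool) \<Rightarrow> (nat + 'k \<Rightarrow> rat) set" where
  "Hgrp p \<eta> = gen_subgroup (range xW \<union> range yW \<union>
     {(\<lambda>i. (1 / of_nat (p n)) * (yW a i - xW n i)) | a n. \<eta> a n})"

definition R_set :: "(nat \<Rightarrow> nat) \<Rightarrow> ('k \<Rightarrow> nat \<Rightarrow> bool) \<Rightarrow> ('k \<Rightarrow> 'g::ab_group_add)
    \<Rightarrow> (nat \<Rightarrow> 'g) \<Rightarrow> 'k \<Rightarrow> 'g \<Rightarrow> nat set" where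
  "R_set p \<eta> g xt a t = {n. \<eta> a n \<and> \<not> divisible_by (p n) (g a - t - xt n)}"

end

theory Submission
  imports Defs "HOL-Number_Theory.Cong"
begin

(* For n in A_alpha the element y_alpha - x_n is divisible by p_n in H, so lifting
   p_n^-1 (y_alpha - x_n) to G shows that g_alpha - t - x~_n becomes p_n-divisible after
   adding some element of T = ker phi.  Since T is torsion, this correction may be replaced
   by its p_n-primary component, which is divisible by every other prime.  Subtracting from
   t the primary corrections of the finitely many n in R_alpha,t repairs each of them
   without spoiling any other index, because the primes p_n are distinct. *)

lemma nsmul_add_left: "nsmul (m + n) g = nsmul m g + nsmul n (g::'a::ab_group_add)"
  by (induction m) (auto simp: add.assoc)

lemma nsmul_mult: "nsmul (m * n) g = nsmul m (nsmul n (g::'a::ab_group_add))"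
  by (induction m) (auto simp: nsmul_add_left)

lemma nsmul_zero_right [simp]: "nsmul n (0::'a::monoid_add) = 0"
  by (induction n) auto

lemma nsmul_add_right: "nsmul n (g + h) = nsmul n g + nsmul n (h::'a::ab_group_add)"
  by (induction n) (auto simp: algebra_simps)

lemma nsmul_minus: "nsmul n (- g) = - nsmul n (g::'a::ab_group_add)"
  by (induction n) (auto simp: algebra_simps)

lemma nsmul_diff: "nsmul n (g - h) = nsmul n g - nsmul n (h::'a::ab_group_add)"
  using nsmul_add_right[of n g "- h"] by (simp add: nsmul_minus)

lemma nsmul_mod:
  fixes v :: "'a::ab_group_add"
  assumes "nsmul m v = 0"
  shows "nsmul k v = nsmul (k mod m) v"
proof -
  have "nsmul k v = nsmul (m * (k div m)) v + nsmul (k mod m) v"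
    by (metis div_mult_mod_eq mult.commute nsmul_add_left)
  also have "nsmul (m * (k div m)) v = 0"
    by (simp add: mult.commute[of m] nsmul_mult assms)
  finally show ?thesis by simp
qed

lemma nsmul_fun_apply: "nsmul n F i = of_nat n * (F i :: 'b::semiring_1)"
  by (induction n) (auto simp: algebra_simps)

lemma (in additive) nsmul: "f (nsmul n x) = nsmul n (f x)"
  by (induction n) (auto simp: zero add)

lemma divisible_by_add:
  "divisible_by m a \<Longrightarrow> divisible_by m b \<Longrightarrow> divisible_by m (a + (b::'a::ab_group_add))"
  unfolding divisible_by_def by (metis nsmul_add_right)

lemma divisible_by_diff:
  "divisible_by m a \<Longrightarrow> divisible_by m b \<Longrightarrow> divisible_by m (a - (b::'a::ab_group_add))"
  unfolding divisible_by_def by (metis nsmul_diff)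

lemma divisible_by_zero: "divisible_by m (0::'a::monoid_add)"
  unfolding divisible_by_def by (metis nsmul_zero_right)

lemma divisible_by_nsmul: "divisible_by m (nsmul m g)"
  unfolding divisible_by_def by blast

lemma divisible_by_sum:
  "(\<And>n. n \<in> S \<Longrightarrow> divisible_by m (f n)) \<Longrightarrow> divisible_by m (sum f S :: 'a::ab_group_add)"
  by (induction S rule: infinite_finite_induct) (auto intro: divisible_by_add divisible_by_zero)

lemma divisible_by_if_order_coprime:
  fixes v :: "'a::ab_group_add"
  assumes "nsmul m v = 0" "coprime q m"
  shows "divisible_by q v"
proof -
  obtain c where c: "[q * c = 1] (mod m)"
    using cong_solve_coprime_nat[OF assms(2)] by auto
  have "nsmul (q * c) v = nsmul (1 mod m) v"
    using nsmul_mod[OF assms(1)] c unfolding cong_def by metis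
  also have "\<dots> = v"
    using nsmul_mod[OF assms(1), of 1] by (cases "m = 1") (auto simp: assms(1))
  finally have "v = nsmul q (nsmul c v)" by (simp add: nsmul_mult)
  then show ?thesis unfolding divisible_by_def by blast
qed

definition divisible_by_primes_except :: "nat \<Rightarrow> 'a::monoid_add \<Rightarrow> bool" where
  "divisible_by_primes_except q v \<longleftrightarrow> (\<forall>r. prime r \<longrightarrow> r \<noteq> q \<longrightarrow> divisible_by r v)"

(* nsmul k s is the q-primary component of s: with m = q^a r and q not dividing r,
   take k = r f where r f = 1 (mod q). *)
lemma torsion_primary_multiple:
  fixes s :: "'a::ab_group_add"
  assumes "nsmul m s = 0" "m > 0" "prime q"
  shows "\<exists>k. divisible_by q (s - nsmul k s) \<and> divisible_by_primes_except q (nsmul k s)"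
proof -
  obtain a r where m: "m = q ^ a * r" and "\<not> q dvd r"
    using multiplicity_decompose'[of m q] assms(2,3) not_prime_unit by blast
  then have "coprime r q"
    using assms(3) by (metis coprime_commute prime_imp_coprime)
  then obtain f where "[r * f = 1] (mod q)"
    using cong_solve_coprime_nat by auto
  then have "r * f mod q = 1"
    using prime_gt_1_nat[OF assms(3)] unfolding cong_def by simp
  then have rf: "r * f = q * (r * f div q) + 1"
    by (metis div_mult_mod_eq mult.commute)
  have "s - nsmul (r * f) s = nsmul q (- nsmul (r * f div q) s)"
    by (subst rf) (simp add: nsmul_add_left nsmul_mult nsmul_minus)
  then have q_part: "divisible_by q (s - nsmul (r * f) s)"
    unfolding divisible_by_def by blast
  have "nsmul (q ^ a) (nsmul (r * f) s) = nsmul f (nsmul m s)"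
    by (metis m mult.assoc mult.commute nsmul_mult)
  then have killed: "nsmul (q ^ a) (nsmul (r * f) s) = 0"
    using assms(1) by simp
  have "divisible_by r' (nsmul (r * f) s)" if "prime r'" "r' \<noteq> q" for r'
    using that assms(3) by (intro divisible_by_if_order_coprime[OF killed]) (simp add: primes_coprime)
  with q_part show ?thesis unfolding divisible_by_primes_except_def by blast
qed

lemma is_subgroup_add:
  assumes "is_subgroup T" "a \<in> T" "b \<in> T"
  shows "a + b \<in> T"
proof -
  have "0 - b \<in> T" using assms unfolding is_subgroup_def by blast
  then have "a - (0 - b) \<in> T" using assms unfolding is_subgroup_def by blast
  then show ?thesis by simp
qed

lemma is_subgroup_nsmul: "is_subgroup T \<Longrightarrow> a \<in> T \<Longrightarrow> nsmul n a \<in> T"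
  by (induction n) (auto intro: is_subgroup_add simp: is_subgroup_def)

lemma is_subgroup_sum: "is_subgroup T \<Longrightarrow> (\<And>n. n \<in> S \<Longrightarrow> f n \<in> T) \<Longrightarrow> sum f S \<in> T"
  by (induction S rule: infinite_finite_induct) (auto intro: is_subgroup_add simp: is_subgroup_def)

lemma primary_correction_in_kernel:
  assumes "additive \<phi>" "{a. \<phi> a = 0} = T" "is_subgroup T" "torsion_set T" "prime q"
    and "\<phi> d = nsmul q (\<phi> k)"
  shows "\<exists>v\<in>T. divisible_by q (d + v) \<and> divisible_by_primes_except q v"
proof -
  define s where "s = nsmul q k - d"
  have "s \<in> T"
    using assms(1,2,6) by (auto simp: s_def additive.diff additive.nsmul)
  then obtain m where "m > 0" "nsmul m s = 0"
    using assms(4) unfolding torsion_set_def by blast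
  then obtain j where j: "divisible_by q (s - nsmul j s)"
      "divisible_by_primes_except q (nsmul j s)"
    using torsion_primary_multiple assms(5) by blast
  have "d + nsmul j s = nsmul q k - (s - nsmul j s)"
    by (simp add: s_def)
  then have "divisible_by q (d + nsmul j s)"
    using divisible_by_diff[OF divisible_by_nsmul[of q k] j(1)] by metis
  then show ?thesis using j(2) is_subgroup_nsmul[OF assms(3) \<open>s \<in> T\<close>] by blast
qed

lemma divisible_by_add_sum_corrections:
  fixes v :: "'i \<Rightarrow> 'a::ab_group_add"
  assumes "inj p" "prime (p m)"
    and "\<And>n. n \<in> R \<Longrightarrow> divisible_by_primes_except (p n) (v n)"
    and "m \<in> R \<Longrightarrow> divisible_by (p m) (x + v m)" "m \<notin> R \<Longrightarrow> divisible_by (p m) x"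
    and "finite R"
  shows "divisible_by (p m) (x + sum v R)"
proof -
  have others: "divisible_by (p m) (sum v (R - {m}))"
    using assms(1-3) unfolding divisible_by_primes_except_def
    by (intro divisible_by_sum) (auto dest: injD)
  show ?thesis
  proof (cases "m \<in> R")
    case True
    then have "x + sum v R = (x + v m) + sum v (R - {m})"
      using assms(6) by (simp add: sum.remove add.assoc)
    then show ?thesis using divisible_by_add assms(4) True others by metis
  next
    case False
    then show ?thesis using divisible_by_add assms(5) others by simp
  qed
qed

lemma Hgrp_y_minus_x_divisible:
  assumes "\<eta> a n" "p n \<noteq> 0"
  shows "\<exists>w\<in>Hgrp p \<eta>. yW a - xW n = nsmul (p n) w"
proof
  let ?w = "\<lambda>i. (1 / of_nat (p n)) * (yW a i - xW n i :: rat)"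
  show "?w \<in> Hgrp p \<eta>"
    unfolding Hgrp_def by (rule gen_base) (use assms(1) in blast)
  show "yW a - xW n = nsmul (p n) ?w"
    using assms(2) by (simp add: fun_eq_iff nsmul_fun_apply)
qed

theorem lemma4p5:
  fixes p :: "nat \<Rightarrow> nat" and \<eta> :: "'k \<Rightarrow> nat \<Rightarrow> bool"
    and T :: "'g::ab_group_add set" and \<phi> :: "'g \<Rightarrow> (nat + 'k \<Rightarrow> rat)"
    and g :: "'k \<Rightarrow> 'g" and xt :: "nat \<Rightarrow> 'g" and \<alpha> :: 'k and t :: 'g
  assumes "uncountable (UNIV :: 'k set)"
    and "strict_mono p" and "\<forall>n. prime (p n)"
    and "is_subgroup T" and "torsion_set T"
    and "\<forall>a b. \<phi> (a + b) = \<phi> a + \<phi> b"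
    and "range \<phi> = Hgrp p \<eta>"
    and "{a. \<phi> a = 0} = T"
    and "balanced T"
    and "\<forall>\<beta>. \<phi> (g \<beta>) = yW \<beta>"
    and "\<forall>n. \<phi> (xt n) = xW n"
    and "t \<in> T"
    and "finite (R_set p \<eta> g xt \<alpha> t)"
  shows "\<exists>t'\<in>T. R_set p \<eta> g xt \<alpha> t' = {}"
proof -
  have \<phi>: "additive \<phi>" using assms(6) by (simp add: additive_def)
  define d where "d n = g \<alpha> - t - xt n" for n
  have d_image: "\<phi> (d n) = yW \<alpha> - xW n" for n
    using assms(8,10-12) by (auto simp: d_def additive.diff[OF \<phi>])
  have "\<exists>v\<in>T. divisible_by (p n) (d n + v) \<and> divisible_by_primes_except (p n) v"
    if n: "\<eta> \<alpha> n" for n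
  proof -
    obtain w where "w \<in> range \<phi>" "yW \<alpha> - xW n = nsmul (p n) w"
      using Hgrp_y_minus_x_divisible[of \<eta> \<alpha> n p] n assms(3,7) not_prime_0 by metis
    then show ?thesis
      using primary_correction_in_kernel[OF \<phi> assms(8,4,5)] assms(3) d_image by auto
  qed
  then obtain v where v: "\<And>n. \<eta> \<alpha> n \<Longrightarrow>
      v n \<in> T \<and> divisible_by (p n) (d n + v n) \<and> divisible_by_primes_except (p n) (v n)"
    by metis
  define R where "R = R_set p \<eta> g xt \<alpha> t"
  have R_sub: "\<eta> \<alpha> n" if "n \<in> R" for n using that unfolding R_def R_set_def by simp
  have "t - sum v R \<in> T"
    using assms(4,12) is_subgroup_sum[OF assms(4), of R v] v R_sub
    unfolding is_subgroup_def by blast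
  moreover have "divisible_by (p m) (d m + sum v R)" if "\<eta> \<alpha> m" for m
  proof (rule divisible_by_add_sum_corrections[where p = p and m = m])
    show "inj p" using assms(2) by (rule strict_mono_imp_inj_on)
    show "finite R" using assms(13) by (simp add: R_def)
    show "m \<notin> R \<Longrightarrow> divisible_by (p m) (d m)"
      using that unfolding R_def R_set_def d_def by simp
  qed (use v R_sub that assms(3) in auto)
  ultimately show ?thesis
    unfolding R_set_def d_def by (intro bexI[of _ "t - sum v R"]) (auto simp: algebra_simps)
qed

end
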